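(* Let $f(z)=z+\sum_{n=2}^{\infty}a_nz^n$ belong to $\mathcal{S}^*_{\xi}$. Then \[ |a_2|\le 1,\qquad |a_3|\le 1,\qquad |a_4|\le \frac{17}{18}. \] These bounds are sharp: each of them is attained with equality by some function in $\mathcal{S}^*_{\xi}$.
   Context: $\mathbb{D}=\{z\in\mathbb{C}:|z|<1\}$. $\mathcal{A}$ is the class of analytic functions $f$ on $\mathbb{D}$ of the form $f(z)=z+\sum_{n\ge2}a_nz^n$. For analytic $f,g$ on $\mathbb{D}$, $f\prec g$ (subordination) means there is an analytic $w:\mathbb{D}\to\mathbb{D}$ with $w(0)=0$ and $f=g\circ w$. Let $\xi(z)=1+\frac{\sin z}{1-z}$ for $z\in\mathbb{D}$, and $\mathcal{S}^*_{\xi}=\{f\in\mathcal{A}: \frac{zf'(z)}{f(z)}\prec \xi(z)\}$. *)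

theory Defs
  imports "HOL-Complex_Analysis.Complex_Analysis"
begin

definition unit_disc :: "complex set" where
  "unit_disc = ball 0 1"

definition classA :: "(complex \<Rightarrow> complex) \<Rightarrow> bool" where
  "classA f \<longleftrightarrow> f holomorphic_on unit_disc \<and> f 0 = 0 \<and> deriv f 0 = 1"

definition coeff_a :: "(complex \<Rightarrow> complex) \<Rightarrow> nat \<Rightarrow> complex" where
  "coeff_a f n = (deriv ^^ n) f 0 / of_nat (fact n)"

definition subordinate :: "(complex \<Rightarrow> complex) \<Rightarrow> (complex \<Rightarrow> complex) \<Rightarrow> bool" where
  "subordinate f g \<longleftrightarrow> f holomorphic_on unit_disc \<and> g holomorphic_on unit_disc \<and>
     (\<exists>w. w holomorphic_on unit_disc \<and> w ` unit_disc \<subseteq> unit_disc \<and> w 0 = 0 \<and>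
          (\<forall>z\<in>unit_disc. f z = g (w z)))"

definition xi :: "complex \<Rightarrow> complex" where
  "xi z = 1 + sin z / (1 - z)"

text \<open>z f'(z)/f(z), with its removable singularity at 0 filled in by the value 1.\<close>
definition starlike_quot :: "(complex \<Rightarrow> complex) \<Rightarrow> complex \<Rightarrow> complex" where
  "starlike_quot f z = (if z = 0 then 1 else z * deriv f z / f z)"

definition S_star_xi :: "(complex \<Rightarrow> complex) set" where
  "S_star_xi = {f. classA f \<and> subordinate (starlike_quot f) xi}"

end

theory Submission
  imports Defs
begin

text \<open>
  If \<open>z f'/f = \<xi> \<circ> w\<close> with a Schwarz function \<open>w(z) = w\<^sub>1 z + w\<^sub>2 z\<^sup>2 + w\<^sub>3 z\<^sup>3 + \<dots>\<close>, comparing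
  power series in \<open>z f' = f \<cdot> (\<xi> \<circ> w)\<close> with \<open>\<xi>(z) = 1 + z + z\<^sup>2 + 5/6 z\<^sup>3 + \<dots>\<close> gives
  \<open>a\<^sub>2 = w\<^sub>1\<close>, \<open>2 a\<^sub>3 = w\<^sub>2 + 2 w\<^sub>1\<^sup>2\<close> and \<open>3 a\<^sub>4 = w\<^sub>3 + 7/2 w\<^sub>1 w\<^sub>2 + 17/6 w\<^sub>1\<^sup>3\<close>.
  The first two bounds follow from \<open>|w\<^sub>1| \<le> 1\<close> and \<open>|w\<^sub>2| \<le> 1 - |w\<^sub>1|\<^sup>2\<close>. For the third,
  one step of Schur's algorithm writes \<open>w\<^sub>2, w\<^sub>3\<close> through the first two coefficients of
  another Schwarz function, after which \<open>|w\<^sub>3 + 7/2 w\<^sub>1 w\<^sub>2 + 17/6 w\<^sub>1\<^sup>3| \<le> 17/6\<close> becomes an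
  elementary polynomial inequality. All bounds are attained by the function with
  \<open>z f'/f = \<xi>\<close>, i.e. \<open>w(z) = z\<close>.
\<close>

lemma coeff_a_eq_fps_expansion: "coeff_a f n = fps_expansion f 0 $ n"
  by (simp add: coeff_a_def fps_expansion_def)

lemma coeff_a_1: "coeff_a f 1 = deriv f 0"
  by (simp add: coeff_a_def)

lemma eventually_nhds_0_in_unit_disc: "eventually (\<lambda>z. z \<in> unit_disc) (nhds 0)"
  unfolding unit_disc_def by (intro eventually_nhds_in_open) auto

lemma has_fps_expansion_unit_disc:
  "f holomorphic_on unit_disc \<Longrightarrow> f has_fps_expansion fps_expansion f 0"
  unfolding unit_disc_def by (intro has_fps_expansion_fps_expansion) auto

lemma fps_expansion_eqI_eventually:
  assumes "f has_fps_expansion F" "eventually (\<lambda>z. g z = f z) (nhds 0)"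
  shows "fps_expansion g 0 = F"
  using fps_expansion_cong[OF assms(2)] fps_expansion_eqI[OF assms(1)] by simp

lemma coeff_a_cong_unit_disc:
  "(\<And>z. z \<in> unit_disc \<Longrightarrow> f z = g z) \<Longrightarrow> coeff_a f n = coeff_a g n"
  unfolding coeff_a_eq_fps_expansion
  by (metis (mono_tags, lifting) eventually_mono eventually_nhds_0_in_unit_disc fps_expansion_cong)

lemma fps_compose_nth_upto_3:
  fixes E W :: "complex fps"
  assumes "W $ 0 = 0"
  shows "(E oo W) $ 1 = E$1 * W$1"
    and "(E oo W) $ 2 = E$1 * W$2 + E$2 * (W$1)^2"
    and "(E oo W) $ 3 = E$1 * W$3 + 2 * E$2 * W$1 * W$2 + E$3 * (W$1)^3"
  using assms
  by (simp_all add: fps_compose_nth numeral_eq_Suc fps_mult_nth power2_eq_square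
      power3_eq_cube algebra_simps)

section \<open>Coefficients of Schwarz functions\<close>

definition schwarz_function :: "(complex \<Rightarrow> complex) \<Rightarrow> bool" where
  "schwarz_function w \<longleftrightarrow> w holomorphic_on unit_disc \<and> w ` unit_disc \<subseteq> unit_disc \<and> w 0 = 0"

lemma schwarz_functionD:
  assumes "schwarz_function w"
  shows "w holomorphic_on ball 0 1" "w 0 = 0" "\<And>z. norm z < 1 \<Longrightarrow> norm (w z) < 1"
  using assms by (auto simp: schwarz_function_def unit_disc_def image_subset_iff)

lemma schwarz_function_id: "schwarz_function (\<lambda>z. z)"
  by (simp add: schwarz_function_def)

lemma coeff_a_rotation:
  assumes "\<And>z. norm z < 1 \<Longrightarrow> w z = \<alpha> * z"
  shows "coeff_a w 1 = \<alpha>" "coeff_a w 2 = 0" "coeff_a w 3 = 0"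
proof -
  have "(\<lambda>z. \<alpha> * z) has_fps_expansion fps_const \<alpha> * fps_X"
    by (intro fps_expansion_intros)
  moreover have "eventually (\<lambda>z. w z = \<alpha> * z) (nhds 0)"
    using eventually_nhds_0_in_unit_disc by eventually_elim (simp add: assms unit_disc_def)
  ultimately have "fps_expansion w 0 = fps_const \<alpha> * fps_X"
    by (rule fps_expansion_eqI_eventually)
  then show "coeff_a w 1 = \<alpha>" "coeff_a w 2 = 0" "coeff_a w 3 = 0"
    by (simp_all add: coeff_a_eq_fps_expansion)
qed

lemma schwarz_function_coeff1_bound:
  assumes "schwarz_function w"
  shows "norm (coeff_a w 1) \<le> 1"
  unfolding coeff_a_1 using Schwarz_Lemma(2)[OF schwarz_functionD[OF assms], of 0] by simp

lemma schwarz_function_coeff1_eq_1_imp_rotation: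
  assumes "schwarz_function w" "norm (coeff_a w 1) = 1"
  obtains \<alpha> where "\<And>z. norm z < 1 \<Longrightarrow> w z = \<alpha> * z" "norm \<alpha> = 1"
  using Schwarz_Lemma(3)[OF schwarz_functionD[OF assms(1)]] assms(2) unfolding coeff_a_1 by auto

lemma schwarz_function_div_z:
  assumes "schwarz_function w" "norm (coeff_a w 1) < 1"
  obtains g where "g holomorphic_on unit_disc" "\<And>z. w z = z * g z" "g 0 = coeff_a w 1"
    "\<And>z. z \<in> unit_disc \<Longrightarrow> norm (g z) < 1"
proof
  note w = schwarz_functionD[OF assms(1)]
  define g where "g = (\<lambda>z. if z = 0 then deriv w 0 else (w z - w 0) / (z - 0))"
  show "g holomorphic_on unit_disc"
    unfolding g_def unit_disc_def by (rule pole_lemma[OF w(1)]) auto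
  show wg: "w z = z * g z" for z
    using w(2) by (simp add: g_def)
  show g0: "g 0 = coeff_a w 1"
    unfolding coeff_a_1 by (simp add: g_def)
  show "norm (g z) < 1" if "z \<in> unit_disc" for z
  proof (cases "z = 0")
    case True
    then show ?thesis using g0 assms(2) by simp
  next
    case False
    have z: "norm z < 1" using that by (simp add: unit_disc_def)
    have "norm (w z) \<noteq> norm z"
    proof
      assume "norm (w z) = norm z"
      then obtain \<alpha> where "\<And>z. norm z < 1 \<Longrightarrow> w z = \<alpha> * z" "norm \<alpha> = 1"
        using Schwarz_Lemma(3)[OF w] z False by blast
      then show False
        using coeff_a_rotation(1)[of w \<alpha>] assms(2) by auto
    qed
    then have "norm (w z) < norm z"
      using Schwarz_Lemma(1)[OF w z] by simp
    then show ?thesis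
      using False wg[of z] by (simp add: norm_mult)
  qed
qed

lemma moebius_normalisation_schwarz_function:
  assumes hg: "g holomorphic_on unit_disc" and glt: "\<And>z. z \<in> unit_disc \<Longrightarrow> norm (g z) < 1"
  defines "\<phi> \<equiv> \<lambda>z. (g z - g 0) / (1 - cnj (g 0) * g z)"
  shows "schwarz_function \<phi>"
    and "\<And>z. z \<in> unit_disc \<Longrightarrow> \<phi> z * (1 - cnj (g 0) * g z) = g z - g 0"
proof -
  have g0: "norm (g 0) < 1"
    using glt by (simp add: unit_disc_def)
  have den: "1 - cnj (g 0) * g z \<noteq> 0" if "z \<in> unit_disc" for z
  proof -
    have "norm (g 0) * norm (g z) \<le> norm (g 0)"
      using glt[OF that] by (simp add: mult_left_le)
    then have "norm (cnj (g 0) * g z) < 1"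
      using g0 by (simp add: norm_mult)
    then show ?thesis by auto
  qed
  then show "\<phi> z * (1 - cnj (g 0) * g z) = g z - g 0" if "z \<in> unit_disc" for z
    using that by (simp add: \<phi>_def)
  have "\<phi> holomorphic_on unit_disc"
    unfolding \<phi>_def using den by (intro holomorphic_intros hg) blast
  moreover have "norm (\<phi> z) < 1" if "z \<in> unit_disc" for z
    using Moebius_function_norm_lt_1[OF g0 glt[OF that], of 0]
    by (simp add: Moebius_function_simple \<phi>_def)
  ultimately show "schwarz_function \<phi>"
    by (auto simp: schwarz_function_def unit_disc_def \<phi>_def)
qed

lemma fps_schur_transform_coeffs:
  fixes G P :: "complex fps"
  assumes PG: "P * (1 - fps_const (cnj a) * G) = G - fps_const a"
    and G0: "G $ 0 = a" and P0: "P $ 0 = 0"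
  shows "G $ 1 = of_real (1 - (norm a)^2) * P $ 1"
    and "G $ 2 = of_real (1 - (norm a)^2) * P $ 2 - cnj a * G $ 1 * P $ 1"
proof -
  have coeff: "(P * (1 - fps_const (cnj a) * G)) $ n = (G - fps_const a) $ n" for n
    using PG by simp
  have "cnj a * a = of_real ((norm a)^2)"
    by (simp only: complex_norm_square mult.commute)
  then have u: "of_real (1 - (norm a)^2) = 1 - cnj a * a"
    by simp
  show "G $ 1 = of_real (1 - (norm a)^2) * P $ 1"
    using coeff[of 1] G0 P0 unfolding u by (simp add: fps_mult_nth_1 algebra_simps)
  show "G $ 2 = of_real (1 - (norm a)^2) * P $ 2 - cnj a * G $ 1 * P $ 1"
    using coeff[of 2] G0 P0 unfolding u by (simp add: fps_mult_nth numeral_eq_Suc algebra_simps)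
qed

text \<open>One step of Schur's algorithm: \<open>\<phi>\<close> is the Moebius normalisation of \<open>w(z)/z\<close>.\<close>

lemma schwarz_function_schur_step:
  assumes "schwarz_function w" "norm (coeff_a w 1) < 1"
  obtains \<phi> where "schwarz_function \<phi>"
    "coeff_a w 2 = of_real (1 - (norm (coeff_a w 1))^2) * coeff_a \<phi> 1"
    "coeff_a w 3 = of_real (1 - (norm (coeff_a w 1))^2) * coeff_a \<phi> 2
                   - cnj (coeff_a w 1) * coeff_a w 2 * coeff_a \<phi> 1"
proof -
  obtain g where hg: "g holomorphic_on unit_disc" and wg: "\<And>z. w z = z * g z"
    and g0: "g 0 = coeff_a w 1" and glt: "\<And>z. z \<in> unit_disc \<Longrightarrow> norm (g z) < 1"
    using schwarz_function_div_z[OF assms] by blast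
  define \<phi> where "\<phi> = (\<lambda>z. (g z - g 0) / (1 - cnj (g 0) * g z))"
  note \<phi> = moebius_normalisation_schwarz_function[OF hg glt, folded \<phi>_def]
  define G where "G = fps_expansion g 0"
  define P where "P = fps_expansion \<phi> 0"
  have W: "fps_expansion w 0 = fps_X * G"
    unfolding G_def using wg
    by (intro fps_expansion_eqI_eventually always_eventually)
       (auto intro!: fps_expansion_intros has_fps_expansion_unit_disc hg)
  have "(\<lambda>z. \<phi> z * (1 - cnj (g 0) * g z)) has_fps_expansion P * (1 - fps_const (cnj (g 0)) * G)"
    using \<phi>(1) unfolding G_def P_def
    by (auto intro!: fps_expansion_intros has_fps_expansion_unit_disc hg simp: schwarz_function_def)
  moreover have "eventually (\<lambda>z. g z - g 0 = \<phi> z * (1 - cnj (g 0) * g z)) (nhds 0)"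
    using eventually_nhds_0_in_unit_disc
    by eventually_elim (use \<phi>(2) in \<open>simp add: \<phi>_def\<close>)
  ultimately have "fps_expansion (\<lambda>z. g z - g 0) 0 = P * (1 - fps_const (cnj (g 0)) * G)"
    by (rule fps_expansion_eqI_eventually)
  moreover have "fps_expansion (\<lambda>z. g z - g 0) 0 = G - fps_const (g 0)"
    unfolding G_def by (intro fps_expansion_eqI fps_expansion_intros has_fps_expansion_unit_disc hg)
  moreover have "G $ 0 = g 0" "P $ 0 = 0"
    using \<phi>(1) by (simp_all add: G_def P_def fps_expansion_def schwarz_function_def)
  ultimately have "G $ 1 = of_real (1 - (norm (g 0))^2) * P $ 1"
    "G $ 2 = of_real (1 - (norm (g 0))^2) * P $ 2 - cnj (g 0) * G $ 1 * P $ 1"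
    using fps_schur_transform_coeffs[of P "g 0" G] by simp_all
  moreover have "coeff_a w 2 = G $ 1" "coeff_a w 3 = G $ 2" "coeff_a \<phi> n = P $ n" for n
    by (simp_all add: coeff_a_eq_fps_expansion W P_def numeral_eq_Suc)
  ultimately show ?thesis
    using that \<phi>(1) g0 by simp
qed

lemma schwarz_function_coeff2_bound:
  assumes "schwarz_function w"
  shows "norm (coeff_a w 2) \<le> 1 - (norm (coeff_a w 1))^2"
proof (cases "norm (coeff_a w 1) = 1")
  case True
  then obtain \<alpha> where "\<And>z. norm z < 1 \<Longrightarrow> w z = \<alpha> * z"
    using schwarz_function_coeff1_eq_1_imp_rotation[OF assms] by blast
  note rotation = coeff_a_rotation[OF this]
  then show ?thesis
    using True unfolding rotation by simp
next
  case False
  then have lt: "norm (coeff_a w 1) < 1"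
    using schwarz_function_coeff1_bound[OF assms] by simp
  obtain \<phi> where "schwarz_function \<phi>"
    and w2: "coeff_a w 2 = of_real (1 - (norm (coeff_a w 1))^2) * coeff_a \<phi> 1"
    using schwarz_function_schur_step[OF assms lt] by blast
  have u: "0 \<le> 1 - (norm (coeff_a w 1))^2"
    using lt by (simp add: power_le_one)
  have "norm (coeff_a w 2) = (1 - (norm (coeff_a w 1))^2) * norm (coeff_a \<phi> 1)"
    unfolding w2 norm_mult norm_of_real using u by simp
  also have "\<dots> \<le> 1 - (norm (coeff_a w 1))^2"
    using schwarz_function_coeff1_bound[OF \<open>schwarz_function \<phi>\<close>] u
    by (simp add: mult_left_le)
  finally show ?thesis .
qed

section \<open>The third-order functional\<close>

lemma functional_discriminant_nonneg:
  fixes T q :: real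
  assumes "0 \<le> T" "T \<le> 1" "0 \<le> q" "q \<le> 1"
  shows "0 \<le> 136/3 * (289/36*T^2 + 17/3*T*(11/6 + q*(1-T)) + (1-T)*((11/6+q)^2 - T*q*(49/4+q)))
              - 49*((1-T)*q - 17/6*T)^2"
proof -
  have expand: "136/3 * (289/36*T^2 + 17/3*T*(11/6 + q*(1-T)) + (1-T)*((11/6+q)^2 - T*q*(49/4+q)))
              - 49*((1-T)*q - 17/6*T)^2 = 4114/27 + 1496/9 * q - 11/3 * (q*(1-T))^2 + 8602/27 * T
           - 187 * (T*q) - 3179/108 * T^2 + 187/9 * (T^2 * q)"
    by (simp add: field_simps power2_eq_square)
  have "(q*(1-T))^2 \<le> 1"
    using assms by (simp add: mult_le_one power_le_one)
  moreover have "T*q \<le> T" "T^2 \<le> 1" "0 \<le> T^2 * q"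
    using assms by (simp_all add: mult_left_le power_le_one)
  ultimately show ?thesis
    unfolding expand using assms by linarith
qed

lemma functional_quadratic_nonneg:
  fixes T q x :: real
  assumes "0 \<le> T" "T \<le> 1" "0 \<le> q" "q \<le> 1"
  shows "0 \<le> (289/36*T^2 + 17/3*T*(11/6 + q*(1-T)) + (1-T)*((11/6+q)^2 - T*q*(49/4+q)))
             + 7*T*((1-T)*q - 17/6*T) * x + 34/3*T^2 * x^2"
proof (cases "T = 0")
  case True
  then show ?thesis using assms by simp
next
  case False
  define A where "A = 289/36*T^2 + 17/3*T*(11/6 + q*(1-T)) + (1-T)*((11/6+q)^2 - T*q*(49/4+q))"
  define B where "B = 7*T*((1-T)*q - 17/6*T)"
  define C where "C = 34/3*T^2"
  have square: "4*C*(A + B*x + C*x^2) = (2*C*x+B)^2 + T^2 * (136/3 * A - 49*((1-T)*q - 17/6*T)^2)"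
    unfolding B_def C_def by (simp add: algebra_simps power2_eq_square)
  have "0 \<le> 136/3 * A - 49*((1-T)*q - 17/6*T)^2"
    unfolding A_def by (rule functional_discriminant_nonneg[OF assms])
  then have "0 \<le> 4*C*(A + B*x + C*x^2)"
    unfolding square by simp
  moreover have "C > 0"
    unfolding C_def using False by simp
  ultimately show ?thesis
    unfolding A_def B_def C_def by (simp add: zero_le_mult_iff)
qed

text \<open>
  Squared, the difference of the two sides factors as \<open>(1 - t\<^sup>2)\<close> times the quadratic
  in \<open>x\<close> above.
\<close>

lemma functional_bound_real_coordinates:
  fixes t x y :: real
  assumes "0 \<le> t" "t \<le> 1" "x^2 + y^2 \<le> 1"
  shows "t * sqrt (((1-t^2)*(7/2*x - x^2 + y^2) + 17/6*t^2)^2 + ((1-t^2)*(7/2*y - 2*x*y))^2)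
         \<le> 17/6 - (1-t^2)*(1 - (x^2+y^2))"
proof -
  define T where "T = t^2"
  define q where "q = x^2+y^2"
  have T: "0 \<le> T" "T \<le> 1" and q: "0 \<le> q" "q \<le> 1"
    using assms by (auto simp: T_def q_def power_le_one)
  have factor: "(17/6 - (1-t^2)*(1 - (x^2+y^2)))^2
      - t^2 * (((1-t^2)*(7/2*x - x^2 + y^2) + 17/6*t^2)^2 + ((1-t^2)*(7/2*y - 2*x*y))^2)
     = (1-T) * ((289/36*T^2 + 17/3*T*(11/6 + q*(1-T)) + (1-T)*((11/6+q)^2 - T*q*(49/4+q)))
             + 7*T*((1-T)*q - 17/6*T) * x + 34/3*T^2 * x^2)"
    unfolding T_def q_def by (simp add: field_simps power2_eq_square)
  have "t^2 * (((1-t^2)*(7/2*x - x^2 + y^2) + 17/6*t^2)^2 + ((1-t^2)*(7/2*y - 2*x*y))^2)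
      \<le> (17/6 - (1-t^2)*(1 - (x^2+y^2)))^2"
    using factor functional_quadratic_nonneg[OF T q, of x] T(2)
    by (smt (verit) mult_nonneg_nonneg)
  then have "(t * sqrt (((1-t^2)*(7/2*x - x^2 + y^2) + 17/6*t^2)^2 + ((1-t^2)*(7/2*y - 2*x*y))^2))^2
      \<le> (17/6 - (1-t^2)*(1 - (x^2+y^2)))^2"
    by (simp add: power_mult_distrib)
  moreover have "(1-t^2)*(1 - (x^2+y^2)) \<le> 1"
    using T q unfolding T_def q_def by (intro mult_le_one) auto
  ultimately show ?thesis
    using power2_le_imp_le by fastforce
qed

lemma functional_bound_real_first_parameter:
  fixes t :: real and b c :: complex
  assumes "0 \<le> t" "t \<le> 1" "norm c \<le> 1 - (norm b)^2"
  shows "norm (of_real (1-t^2) * c - of_real (1-t^2) * of_real t * b^2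
           + 7/2 * of_real t * of_real (1-t^2) * b + 17/6 * of_real t ^ 3) \<le> 17/6"
proof -
  define u where "u = 1 - t^2"
  define Y where "Y = of_real u * (7/2 * b - b^2) + 17/6 * of_real t ^ 2"
  have u: "0 \<le> u" "u \<le> 1"
    using assms by (auto simp: u_def power_le_one)
  have split: "of_real (1-t^2) * c - of_real (1-t^2) * of_real t * b^2
           + 7/2 * of_real t * of_real (1-t^2) * b + 17/6 * of_real t ^ 3
         = of_real u * c + of_real t * Y"
    by (simp add: Y_def u_def algebra_simps power2_eq_square power3_eq_cube)
  have "Re Y = u*(7/2*Re b - (Re b)^2 + (Im b)^2) + 17/6*t^2"
    and "Im Y = u*(7/2*Im b - 2*Re b*Im b)"
    by (simp_all add: Y_def power2_eq_square algebra_simps)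
  moreover have b: "(Re b)^2 + (Im b)^2 \<le> 1"
    using assms(3) norm_ge_zero[of c] unfolding cmod_power2 by linarith
  ultimately have tY: "t * norm Y \<le> 17/6 - u*(1 - ((Re b)^2+(Im b)^2))"
    using functional_bound_real_coordinates[OF assms(1,2) b]
    by (simp add: norm_complex_def u_def)
  have "norm (of_real u * c + of_real t * Y) \<le> u * norm c + t * norm Y"
    using norm_triangle_ineq[of "of_real u * c" "of_real t * Y"] u assms(1)
    by (simp add: norm_mult)
  also have "u * norm c \<le> u * (1 - ((Re b)^2 + (Im b)^2))"
    using assms(3) u by (intro mult_left_mono) (auto simp: cmod_power2)
  finally show ?thesis
    unfolding split using tY by linarith
qed

text \<open>
  The functional \<open>w\<^sub>3 + 7/2 w\<^sub>1 w\<^sub>2 + 17/6 w\<^sub>1\<^sup>3\<close> expressed through the Schur parameters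
  \<open>a = w\<^sub>1\<close>, \<open>b = \<phi>\<^sub>1\<close>, \<open>c = \<phi>\<^sub>2\<close>; rotating \<open>a\<close> onto the positive axis reduces it to
  the previous lemma.
\<close>

lemma functional_bound_schur_parameters:
  fixes a b c :: complex
  assumes "norm a \<le> 1" "norm c \<le> 1 - (norm b)^2"
  shows "norm (of_real (1 - (norm a)^2) * c - of_real (1 - (norm a)^2) * cnj a * b^2
           + 7/2 * a * of_real (1 - (norm a)^2) * b + 17/6 * a ^ 3) \<le> 17/6"
proof (cases "a = 0")
  case True
  have "norm c \<le> 1"
    using assms(2) zero_le_power2[of "norm b"] by linarith
  then show ?thesis
    using True by simp
next
  case False
  define t where "t = norm a"
  define e where "e = a / of_real t"
  have t: "0 \<le> t" "t \<le> 1"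
    using assms by (auto simp: t_def)
  have ne: "norm e = 1" and e0: "e \<noteq> 0"
    using False by (auto simp: e_def t_def norm_divide)
  have ae: "a = of_real t * e"
    using False by (simp add: e_def t_def)
  have "e * cnj e = 1"
    using complex_norm_square[of e] ne by simp
  then have ca: "cnj a = of_real t / e"
    using e0 by (simp add: ae field_simps)
  define b' where "b' = b / e^2"
  define c' where "c' = c / e^3"
  have "of_real (1 - (norm a)^2) * c - of_real (1 - (norm a)^2) * cnj a * b^2
           + 7/2 * a * of_real (1 - (norm a)^2) * b + 17/6 * a ^ 3
      = e^3 * (of_real (1-t^2) * c' - of_real (1-t^2) * of_real t * b'^2
           + 7/2 * of_real t * of_real (1-t^2) * b' + 17/6 * of_real t ^ 3)"
    unfolding ca b'_def c'_def t_def[symmetric] unfolding ae using e0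
    by (simp add: field_simps power2_eq_square power3_eq_cube)
  also have "norm \<dots> \<le> 17/6"
    using functional_bound_real_first_parameter[OF t, of c' b'] assms(2) ne
    by (simp add: b'_def c'_def norm_mult norm_divide norm_power)
  finally show ?thesis .
qed

lemma schwarz_function_functional_bound:
  assumes "schwarz_function w"
  shows "norm (coeff_a w 3 + 7/2 * coeff_a w 1 * coeff_a w 2 + 17/6 * coeff_a w 1 ^ 3) \<le> 17/6"
proof (cases "norm (coeff_a w 1) = 1")
  case True
  then obtain \<alpha> where "\<And>z. norm z < 1 \<Longrightarrow> w z = \<alpha> * z"
    using schwarz_function_coeff1_eq_1_imp_rotation[OF assms] by blast
  note rotation = coeff_a_rotation[OF this]
  then show ?thesis
    using True unfolding rotation by (simp add: norm_mult norm_power)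
next
  case False
  define a where "a = coeff_a w 1"
  then have lt: "norm a < 1"
    using schwarz_function_coeff1_bound[OF assms] False by simp
  obtain \<phi> where "schwarz_function \<phi>"
    and w2: "coeff_a w 2 = of_real (1 - (norm a)^2) * coeff_a \<phi> 1"
    and w3: "coeff_a w 3 = of_real (1 - (norm a)^2) * coeff_a \<phi> 2 - cnj a * coeff_a w 2 * coeff_a \<phi> 1"
    using schwarz_function_schur_step[OF assms lt[unfolded a_def]] unfolding a_def by blast
  have "coeff_a w 3 + 7/2 * coeff_a w 1 * coeff_a w 2 + 17/6 * coeff_a w 1 ^ 3 =
     of_real (1 - (norm a)^2) * coeff_a \<phi> 2 - of_real (1 - (norm a)^2) * cnj a * (coeff_a \<phi> 1)^2
           + 7/2 * a * of_real (1 - (norm a)^2) * coeff_a \<phi> 1 + 17/6 * a ^ 3"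
    unfolding w3 w2 a_def[symmetric] by (simp add: field_simps power2_eq_square)
  also have "norm \<dots> \<le> 17/6"
    using lt schwarz_function_coeff2_bound[OF \<open>schwarz_function \<phi>\<close>]
    by (intro functional_bound_schur_parameters) auto
  finally show ?thesis .
qed

section \<open>Coefficients of functions in the class\<close>

lemma xi_holomorphic: "xi holomorphic_on unit_disc"
proof -
  have "1 - z \<noteq> 0" if "z \<in> unit_disc" for z
    using that by (auto simp: unit_disc_def)
  then show ?thesis
    unfolding xi_def[abs_def] by (intro holomorphic_intros) auto
qed

lemma coeff_a_xi: "coeff_a xi 1 = 1" "coeff_a xi 2 = 1" "coeff_a xi 3 = 5/6"
proof -
  define E where "E = fps_expansion xi 0"
  have "(\<lambda>z. (1 - z) * (xi z - 1)) has_fps_expansion (1 - fps_X) * (E - 1)"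
    unfolding E_def by (intro fps_expansion_intros has_fps_expansion_unit_disc xi_holomorphic)
  moreover have "eventually (\<lambda>z. sin z = (1 - z) * (xi z - 1)) (nhds 0)"
    using eventually_nhds_0_in_unit_disc
    by eventually_elim (auto simp: xi_def unit_disc_def)
  ultimately have "fps_expansion sin 0 = (1 - fps_X) * (E - 1)"
    by (rule fps_expansion_eqI_eventually)
  moreover have "fps_expansion sin 0 = fps_sin 1"
    by (intro fps_expansion_eqI has_fps_expansion_sin')
  ultimately have "(1 - fps_X) * (E - 1) = fps_sin 1"
    by metis
  then have "(E - 1) - fps_X * (E - 1) = fps_sin 1"
    by (simp add: algebra_simps)
  then have step: "((E - 1) - fps_X * (E - 1)) $ n = fps_sin 1 $ n" for n
    by simp
  have "E $ 0 = 1"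
    by (simp add: E_def fps_expansion_def xi_def)
  then have E1: "E $ 1 = 1"
    using step[of 1] by simp
  then have E2: "E $ 2 = 1"
    using step[of 2] by (simp add: fps_sin_def numeral_eq_Suc)
  have "fps_sin (1::complex) $ 3 = -1/6"
    by (simp add: fps_sin_def fact_numeral)
  then have "E $ 3 = 5/6"
    using step[of 3] E2 by (simp add: diff_eq_eq)
  with E1 E2 show "coeff_a xi 1 = 1" "coeff_a xi 2 = 1" "coeff_a xi 3 = 5/6"
    by (simp_all add: coeff_a_eq_fps_expansion E_def)
qed

lemma coeff_a_compose_schwarz_function:
  assumes "\<phi> holomorphic_on unit_disc" "schwarz_function w"
  shows "coeff_a (\<phi> \<circ> w) 1 = coeff_a \<phi> 1 * coeff_a w 1"
    and "coeff_a (\<phi> \<circ> w) 2 = coeff_a \<phi> 1 * coeff_a w 2 + coeff_a \<phi> 2 * (coeff_a w 1)^2"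
    and "coeff_a (\<phi> \<circ> w) 3 = coeff_a \<phi> 1 * coeff_a w 3
           + 2 * coeff_a \<phi> 2 * coeff_a w 1 * coeff_a w 2 + coeff_a \<phi> 3 * (coeff_a w 1)^3"
proof -
  have W0: "fps_expansion w 0 $ 0 = 0"
    using assms(2) by (simp add: fps_expansion_def schwarz_function_def)
  have "(\<phi> \<circ> w) has_fps_expansion (fps_expansion \<phi> 0 oo fps_expansion w 0)"
    using assms W0 by (intro has_fps_expansion_compose has_fps_expansion_unit_disc)
      (auto simp: schwarz_function_def)
  then have "fps_expansion (\<phi> \<circ> w) 0 = fps_expansion \<phi> 0 oo fps_expansion w 0"
    by (rule fps_expansion_eqI)
  then show "coeff_a (\<phi> \<circ> w) 1 = coeff_a \<phi> 1 * coeff_a w 1"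
    and "coeff_a (\<phi> \<circ> w) 2 = coeff_a \<phi> 1 * coeff_a w 2 + coeff_a \<phi> 2 * (coeff_a w 1)^2"
    and "coeff_a (\<phi> \<circ> w) 3 = coeff_a \<phi> 1 * coeff_a w 3
           + 2 * coeff_a \<phi> 2 * coeff_a w 1 * coeff_a w 2 + coeff_a \<phi> 3 * (coeff_a w 1)^3"
    unfolding coeff_a_eq_fps_expansion using fps_compose_nth_upto_3[OF W0] by simp_all
qed

lemma classA_eventually_nonzero:
  assumes "classA f"
  shows "eventually (\<lambda>z. f z \<noteq> 0) (at 0)"
proof -
  have "f field_differentiable at 0"
    using assms by (intro holomorphic_on_imp_differentiable_at[of _ unit_disc])
      (auto simp: classA_def unit_disc_def)
  then have "(f has_field_derivative 1) (at 0)"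
    using assms by (simp add: classA_def DERIV_deriv_iff_field_differentiable[symmetric])
  then have "((\<lambda>z. f z / z) \<longlongrightarrow> 1) (at 0)"
    using assms by (simp add: has_field_derivative_iff classA_def)
  then have "eventually (\<lambda>z. f z / z \<noteq> 0) (at 0)"
    by (rule tendsto_imp_eventually_ne) simp
  then show ?thesis
    by eventually_elim auto
qed

text \<open>Coefficient comparison in \<open>f \<cdot> (z f'/f) = z f'\<close>.\<close>

lemma classA_starlike_quot_coeffs:
  assumes "classA f" and hp: "starlike_quot f holomorphic_on unit_disc"
  defines "p \<equiv> coeff_a (starlike_quot f)"
  shows "coeff_a f 2 = p 1"
    and "2 * coeff_a f 3 = p 2 + coeff_a f 2 * p 1"
    and "3 * coeff_a f 4 = p 3 + coeff_a f 2 * p 2 + coeff_a f 3 * p 1"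
proof -
  have hf: "f holomorphic_on unit_disc" and f0: "f 0 = 0" and df0: "deriv f 0 = 1"
    using assms(1) by (auto simp: classA_def)
  define F where "F = fps_expansion f 0"
  define P where "P = fps_expansion (starlike_quot f) 0"
  have "eventually (\<lambda>z. z * deriv f z = f z * starlike_quot f z) (at 0)"
    using classA_eventually_nonzero[OF assms(1)] by eventually_elim (simp add: starlike_quot_def f0)
  then have "eventually (\<lambda>z. z * deriv f z = f z * starlike_quot f z) (nhds 0)"
    by (simp add: eventually_nhds_conv_at f0)
  moreover have "(\<lambda>z. f z * starlike_quot f z) has_fps_expansion F * P"
    unfolding F_def P_def by (intro fps_expansion_intros has_fps_expansion_unit_disc hf hp)
  moreover have "(\<lambda>z. z * deriv f z) has_fps_expansion fps_X * fps_deriv F"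
    unfolding F_def by (intro fps_expansion_intros has_fps_expansion_unit_disc hf)
  ultimately have "fps_X * fps_deriv F = F * P"
    using fps_expansion_eqI_eventually fps_expansion_eqI by metis
  then have FP: "(F * P) $ n = (fps_X * fps_deriv F) $ n" for n
    by simp
  have F: "F $ 0 = 0" "F $ 1 = 1" and P: "P $ 0 = 1"
    using f0 df0 by (simp_all add: F_def P_def fps_expansion_def starlike_quot_def)
  have a: "coeff_a f n = F $ n" and p: "p n = P $ n" for n
    by (simp_all add: coeff_a_eq_fps_expansion F_def P_def p_def)
  show "coeff_a f 2 = p 1"
    using FP[of 2] F P unfolding a p by (simp add: fps_mult_nth numeral_eq_Suc)
  show "2 * coeff_a f 3 = p 2 + coeff_a f 2 * p 1"
    using FP[of 3] F P unfolding a p by (simp add: fps_mult_nth numeral_eq_Suc algebra_simps)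
  show "3 * coeff_a f 4 = p 3 + coeff_a f 2 * p 2 + coeff_a f 3 * p 1"
    using FP[of 4] F P unfolding a p by (simp add: fps_mult_nth numeral_eq_Suc algebra_simps)
qed

lemma S_star_xi_coeffs:
  assumes "f \<in> S_star_xi" "schwarz_function w"
    and "\<forall>z\<in>unit_disc. starlike_quot f z = xi (w z)"
  shows "coeff_a f 2 = coeff_a w 1"
    and "coeff_a f 3 = (coeff_a w 2 + 2 * coeff_a w 1 ^ 2) / 2"
    and "coeff_a f 4 = (coeff_a w 3 + 7/2 * coeff_a w 1 * coeff_a w 2 + 17/6 * coeff_a w 1 ^ 3) / 3"
proof -
  have f: "classA f" "starlike_quot f holomorphic_on unit_disc"
    using assms(1) by (auto simp: S_star_xi_def subordinate_def)
  have "coeff_a (starlike_quot f) n = coeff_a (xi \<circ> w) n" for n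
    using assms(3) by (intro coeff_a_cong_unit_disc) simp
  note p = classA_starlike_quot_coeffs[OF f, unfolded this
      coeff_a_compose_schwarz_function[OF xi_holomorphic assms(2)] coeff_a_xi]
  show a2: "coeff_a f 2 = coeff_a w 1"
    using p(1) by simp
  show a3: "coeff_a f 3 = (coeff_a w 2 + 2 * coeff_a w 1 ^ 2) / 2"
    using p(2) unfolding a2 by (simp add: field_simps power2_eq_square)
  show "coeff_a f 4 = (coeff_a w 3 + 7/2 * coeff_a w 1 * coeff_a w 2 + 17/6 * coeff_a w 1 ^ 3) / 3"
    using p(3) unfolding a2 a3 by (simp add: field_simps power2_eq_square power3_eq_cube) algebra
qed

lemma S_star_xi_coeff_bounds:
  assumes "f \<in> S_star_xi"
  shows "norm (coeff_a f 2) \<le> 1" "norm (coeff_a f 3) \<le> 1" "norm (coeff_a f 4) \<le> 17/18"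
proof -
  obtain w where "schwarz_function w" "\<forall>z\<in>unit_disc. starlike_quot f z = xi (w z)"
    using assms by (auto simp: S_star_xi_def subordinate_def schwarz_function_def)
  note a = S_star_xi_coeffs[OF assms this]
  note w1 = schwarz_function_coeff1_bound[OF \<open>schwarz_function w\<close>]
  note w2 = schwarz_function_coeff2_bound[OF \<open>schwarz_function w\<close>]
  show "norm (coeff_a f 2) \<le> 1"
    using w1 by (simp add: a)
  have "norm (coeff_a w 2 + 2 * coeff_a w 1 ^ 2) \<le> norm (coeff_a w 2) + 2 * (norm (coeff_a w 1))^2"
    using norm_triangle_ineq[of "coeff_a w 2" "2 * coeff_a w 1 ^ 2"] by (simp add: norm_mult norm_power)
  also have "\<dots> \<le> 2"
    using w1 w2 power_le_one[OF norm_ge_zero w1, of 2] by linarith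
  finally show "norm (coeff_a f 3) \<le> 1"
    by (simp add: a norm_divide)
  show "norm (coeff_a f 4) \<le> 17/18"
    using schwarz_function_functional_bound[OF \<open>schwarz_function w\<close>] by (simp add: a norm_divide)
qed

text \<open>The witness is \<open>f(z) = z exp (\<integral>\<^sub>0\<^sup>z (p(t) - 1)/t dt)\<close>.\<close>

lemma exists_classA_with_starlike_quot:
  assumes hp: "p holomorphic_on unit_disc" and p0: "p 0 = 1"
  obtains f where "classA f" "\<forall>z\<in>unit_disc. starlike_quot f z = p z"
proof -
  define h where "h = (\<lambda>z. if z = 0 then deriv p 0 else (p z - p 0) / (z - 0))"
  have "h holomorphic_on unit_disc"
    unfolding h_def unit_disc_def by (rule pole_lemma) (use hp in \<open>auto simp: unit_disc_def\<close>)
  then obtain G where G: "\<And>z. z \<in> unit_disc \<Longrightarrow> (G has_field_derivative h z) (at z)"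
    using holomorphic_convex_primitive'[of unit_disc h]
    by (auto simp: unit_disc_def at_within_open[of _ "ball 0 1"])
  define f where "f = (\<lambda>z. z * exp (G z - G 0))"
  have df: "(f has_field_derivative exp (G z - G 0) * (1 + z * h z)) (at z)" if "z \<in> unit_disc" for z
    unfolding f_def by (rule derivative_eq_intros G[OF that] refl | simp add: algebra_simps)+
  have "classA f"
    unfolding classA_def
  proof (intro conjI)
    have "\<forall>z\<in>unit_disc. \<exists>f'. (f has_field_derivative f') (at z)"
      using df by blast
    then show "f holomorphic_on unit_disc"
      by (simp add: unit_disc_def holomorphic_on_open)
    show "f 0 = 0" "deriv f 0 = 1"
      using DERIV_imp_deriv[OF df[of 0]] by (simp_all add: f_def unit_disc_def)
  qed
  moreover have "starlike_quot f z = p z" if "z \<in> unit_disc" for z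
  proof (cases "z = 0")
    case False
    then show ?thesis
      using DERIV_imp_deriv[OF df[OF that]] p0
      by (simp add: starlike_quot_def f_def h_def field_simps)
  qed (simp add: starlike_quot_def p0)
  ultimately show ?thesis
    using that by blast
qed

lemma S_star_xi_extremal:
  obtains f where "f \<in> S_star_xi" "coeff_a f 2 = 1" "coeff_a f 3 = 1" "coeff_a f 4 = 17/18"
proof -
  obtain f where f: "classA f" and quot: "\<forall>z\<in>unit_disc. starlike_quot f z = xi z"
    using exists_classA_with_starlike_quot[OF xi_holomorphic] by (auto simp: xi_def)
  have "starlike_quot f holomorphic_on unit_disc"
    using quot xi_holomorphic holomorphic_transform by metis
  with f quot have fS: "f \<in> S_star_xi"
    using schwarz_function_id xi_holomorphic
    by (auto simp: S_star_xi_def subordinate_def schwarz_function_def intro!: exI[of _ "\<lambda>z. z"])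
  have "coeff_a (\<lambda>z. z) 1 = 1" "coeff_a (\<lambda>z. z) 2 = 0" "coeff_a (\<lambda>z. z) 3 = 0"
    using coeff_a_rotation[of "\<lambda>z. z" 1] by simp_all
  with S_star_xi_coeffs[OF fS schwarz_function_id] quot
  have "coeff_a f 2 = 1" "coeff_a f 3 = 1" "coeff_a f 4 = 17/18"
    by simp_all
  with fS show ?thesis
    by (rule that)
qed

theorem theorem3p2:
  shows "(\<forall>f\<in>S_star_xi. norm (coeff_a f 2) \<le> 1 \<and> norm (coeff_a f 3) \<le> 1
            \<and> norm (coeff_a f 4) \<le> 17 / 18)
       \<and> (\<exists>f\<in>S_star_xi. norm (coeff_a f 2) = 1)
       \<and> (\<exists>f\<in>S_star_xi. norm (coeff_a f 3) = 1)
       \<and> (\<exists>f\<in>S_star_xi. norm (coeff_a f 4) = 17 / 18)"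
proof -
  obtain f where "f \<in> S_star_xi" and a: "coeff_a f 2 = 1" "coeff_a f 3 = 1" "coeff_a f 4 = 17/18"
    by (rule S_star_xi_extremal)
  moreover have "norm (coeff_a f 2) = 1" "norm (coeff_a f 3) = 1" "norm (coeff_a f 4) = 17/18"
    unfolding a by (simp_all add: norm_divide)
  ultimately show ?thesis
    using S_star_xi_coeff_bounds by blast
qed

end
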